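(* Let $k\ge2$, $p\in(0,1)$, $q=1-p$, and $R^{(k)}_n(p)=\mathbb{E}[Y(k,n,p)]$. Then $R^{(k)}_1(p)=1$, for $n\ge2$ $$R^{(k)}_n(p)=n-\frac1q\sum_{i=1}^{n-1}(n-i)\,s^{(k)}_i\,(p^{k-1}q)^i,$$ and $$\sum_{n\ge1}R^{(k)}_n(p)z^n=\frac{z}{(1-z)^2}\left(1-\frac1qS^{(k)}(p^{k-1}qz)\right).$$
   Context: Matchbox process: fix integers $k\ge 2$, $n\ge 1$ and $p\in(0,1)$, $q=1-p$. Initially $k$ boxes each contain $n$ matches. At each time step, independently, with probability $p$ a match is removed from a box currently containing the largest number of matches, and with probability $q$ from a box currently containing the smallest number (ties broken arbitrarily). A diagonal state is a state in which all $k$ boxes contain the same number of matches. Let $Y=Y(k,n,p)$ be the smallest $i\in\{1,\dots,n-1\}$ such that the process reaches the diagonal state in which every box contains $n-i$ matches (before any box is empty), with the convention $Y=n$ if no such $i$ exists. $s^{(k)}_i=\frac{k-1}{ki-1}\binom{ki-1}{i-1}$ and $S^{(k)}(z)=\sum_{i\ge1}s^{(k)}_iz^i$. *)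

theory Defs
  imports "HOL-Probability.Probability" "HOL-Computational_Algebra.Formal_Power_Series"
begin

text \<open>States of the matchbox process: the multiset of box contents (k boxes).
  One step: True = remove a match from a box with the largest number of matches
  (probability p), False = from a box with the smallest number (probability q).
  Once some box is empty the process is frozen (it is only considered before
  any box is empty).\<close>

definition mb_step :: "bool \<Rightarrow> nat multiset \<Rightarrow> nat multiset" where
  "mb_step b M =
     (if 0 \<in># M then M
      else (let x = (if b then Max (set_mset M) else Min (set_mset M))
            in add_mset (x - 1) (M - {#x#})))"

definition mb_state :: "nat \<Rightarrow> nat \<Rightarrow> bool list \<Rightarrow> nat \<Rightarrow> nat multiset" where
  "mb_state k n \<omega> t = foldl (\<lambda>M b. mb_step b M) (replicate_mset k n) (take t \<omega>)"

text \<open>The diagonal state with all boxes containing n - i matches can only occur at time k*i.\<close>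
definition mb_hits :: "nat \<Rightarrow> nat \<Rightarrow> bool list \<Rightarrow> nat \<Rightarrow> bool" where
  "mb_hits k n \<omega> i \<longleftrightarrow> mb_state k n \<omega> (k * i) = replicate_mset k (n - i)"

definition mb_Y :: "nat \<Rightarrow> nat \<Rightarrow> bool list \<Rightarrow> nat" where
  "mb_Y k n \<omega> =
     (if \<exists>i\<in>{1..n-1}. mb_hits k n \<omega> i then (LEAST i. i \<in> {1..n-1} \<and> mb_hits k n \<omega> i) else n)"

fun choice_pmf :: "real \<Rightarrow> nat \<Rightarrow> bool list pmf" where
  "choice_pmf p 0 = return_pmf []"
| "choice_pmf p (Suc N) = bind_pmf (bernoulli_pmf p) (\<lambda>b. map_pmf (\<lambda>xs. b # xs) (choice_pmf p N))"

text \<open>R_n^(k)(p) = E[Y(k,n,p)]; Y only depends on the first k(n-1) steps.\<close>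
definition mb_R :: "nat \<Rightarrow> nat \<Rightarrow> real \<Rightarrow> real" where
  "mb_R k n p = measure_pmf.expectation (choice_pmf p (k * (n - 1))) (\<lambda>\<omega>. real (mb_Y k n \<omega>))"

definition s_coef :: "nat \<Rightarrow> nat \<Rightarrow> real" where
  "s_coef k i = (real k - 1) / (real (k * i) - 1) * real ((k * i - 1) choose (i - 1))"

text \<open>The formal power series S^(k)(c z) = sum_{i>=1} s_i c^i z^i.\<close>
definition S_fps :: "nat \<Rightarrow> real \<Rightarrow> real fps" where
  "S_fps k c = Abs_fps (\<lambda>i. if i = 0 then 0 else s_coef k i * c ^ i)"

end

theory Submission
  imports Defs
begin

(* Away from diagonal states the configuration consists of one box holding the minimum u
  and k - 1 balanced boxes (contents differing by at most one) whose total excess over u is D.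
  Removing a match from a largest box keeps the k - 1 boxes balanced and lowers D by one;
  removing it from the smallest box lowers u and raises D by k - 1.  So after the first step,
  which leads from the diagonal to D = k - 1, the process is the walk D with steps -1
  (probability p) and +(k - 1) (probability q), and Y = i exactly when this walk first hits 0
  at time k i - 1.  By the hitting time theorem that has probability
  (k-1)/(ki-1) binom(ki-1, i-1) p^((k-1)i) q^(i-1) = s_i p^((k-1)i) q^(i-1).  Summing,
  E Y = n - sum_i (n - i) P(Y = i), and multiplying by 1/(1 - z)^2 gives the generating
  function. *)


section \<open>Balanced configurations\<close>

definition balanced_mset :: "nat \<Rightarrow> nat \<Rightarrow> nat multiset" where
  "balanced_mset d T =
     replicate_mset (d - T mod d) (T div d) + replicate_mset (T mod d) (Suc (T div d))"

lemma sum_mset_balanced_mset: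
  assumes "0 < d"
  shows "sum_mset (balanced_mset d T) = T"
proof -
  have "(d - T mod d) * (T div d) + T mod d * Suc (T div d) = d * (T div d) + T mod d"
    using assms by (simp add: algebra_simps diff_mult_distrib)
  then show ?thesis
    by (simp add: balanced_mset_def)
qed

lemma balanced_mset_eq_replicate_mset_iff:
  assumes "0 < d"
  shows "balanced_mset d T = replicate_mset d v \<longleftrightarrow> T = d * v"
proof
  assume "balanced_mset d T = replicate_mset d v"
  then have "sum_mset (balanced_mset d T) = d * v"
    by simp
  then show "T = d * v"
    by (simp add: sum_mset_balanced_mset[OF assms])
next
  assume "T = d * v"
  with assms show "balanced_mset d T = replicate_mset d v"
    by (simp add: balanced_mset_def)
qed

lemma div_le_of_mem_balanced_mset: "x \<in># balanced_mset d T \<Longrightarrow> T div d \<le> x"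
  by (auto simp: balanced_mset_def split: if_splits)

lemma Max_balanced_mset:
  "0 < d \<Longrightarrow> Max (set_mset (balanced_mset d T)) = (if T mod d = 0 then T div d else Suc (T div d))"
  by (rule Max_eqI) (auto simp: balanced_mset_def split: if_splits)

lemma balanced_mset_remove_Max:
  fixes d T :: nat
  assumes "0 < d"
  defines "x \<equiv> Max (set_mset (balanced_mset d T))"
  shows "add_mset (x - 1) (balanced_mset d T - {#x#}) = balanced_mset d (T - 1)"
proof -
  obtain d' where d: "d = Suc d'"
    using assms not0_implies_Suc by blast
  define a r where "a = T div d" and "r = T mod d"
  have T: "T = d * a + r" and "r < d"
    using assms by (simp_all add: a_def r_def)
  show ?thesis
  proof (cases r)
    case 0
    show ?thesis
    proof (cases a)
      case 0
      with \<open>r = 0\<close> show ?thesis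
        by (simp add: x_def T d balanced_mset_def)
    next
      case (Suc a')
      have "T - 1 = d * a' + d'"
        by (simp add: T Suc \<open>r = 0\<close> d)
      moreover have "d' < d"
        by (simp add: d)
      ultimately have "(T - 1) div d = a'" "(T - 1) mod d = d'"
        by simp_all
      moreover have "balanced_mset d T = replicate_mset d (Suc a')" "x = Suc a'"
        using assms \<open>r = 0\<close> Suc
        by (simp_all add: x_def Max_balanced_mset balanced_mset_def
            a_def[symmetric] r_def[symmetric])
      ultimately show ?thesis
        by (simp add: balanced_mset_def d)
    qed
  next
    case (Suc r')
    have "T - 1 = d * a + r'"
      by (simp add: T Suc)
    then have "(T - 1) div d = a" "(T - 1) mod d = r'"
      using \<open>r < d\<close> Suc by simp_all
    moreover have "balanced_mset d T = replicate_mset (d - r) a + replicate_mset r (Suc a)"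
      by (simp add: balanced_mset_def a_def r_def)
    moreover have "x = Suc a"
      using assms Suc by (simp add: x_def Max_balanced_mset a_def r_def[symmetric])
    moreover have "d - r' = Suc (d - r)"
      using \<open>r < d\<close> Suc by simp
    ultimately show ?thesis
      by (simp add: balanced_mset_def Suc)
  qed
qed

fun mb_config :: "nat \<Rightarrow> nat \<times> nat \<Rightarrow> nat multiset" where
  "mb_config k (u, D) = add_mset u (balanced_mset (k - 1) ((k - 1) * u + D))"

fun excess_step :: "nat \<Rightarrow> nat \<times> nat \<Rightarrow> bool \<Rightarrow> nat \<times> nat" where
  "excess_step k (u, D) b =
     (if u = 0 then (u, D)
      else if D = 0 then (u - 1, k - 1)
      else if b then (u, D - 1)
      else (u - 1, D + (k - 1)))"

lemma mb_step_add_mset_min: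
  assumes "0 < u" and "B \<noteq> {#}" and "\<forall>x\<in>#B. u \<le> x"
  defines "x \<equiv> Max (set_mset B)"
  shows "mb_step b (add_mset u B) =
    (if b then add_mset u (add_mset (x - 1) (B - {#x#})) else add_mset (u - 1) B)"
proof -
  have "x \<in># B" and "u \<le> x"
    using assms by (simp_all add: x_def)
  moreover have "0 \<notin># add_mset u B"
    using assms by auto
  moreover have "Min (set_mset (add_mset u B)) = u"
    using assms by (intro Min_eqI) auto
  moreover have "Max (set_mset (add_mset u B)) = x"
    using assms \<open>u \<le> x\<close> by (simp add: x_def max_def)
  ultimately show ?thesis
    by (simp add: mb_step_def add_mset_commute)
qed

lemma mb_step_mb_config:
  assumes "2 \<le> k"
  shows "mb_step b (mb_config k (u, D)) = mb_config k (excess_step k (u, D) b)"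
proof -
  obtain d where k: "k = Suc d" and "0 < d"
    using assms by (cases k) auto
  define B where "B = balanced_mset d (d * u + D)"
  define x where "x = Max (set_mset B)"
  have config: "mb_config k (u, D) = add_mset u B"
    by (simp add: B_def k)
  show ?thesis
  proof (cases "u = 0")
    case True
    then show ?thesis
      by (simp add: mb_step_def config)
  next
    case False
    have "B \<noteq> {#}"
      using \<open>0 < d\<close> by (simp add: B_def balanced_mset_def)
    moreover have "\<forall>y\<in>#B. u \<le> y"
      using div_le_of_mem_balanced_mset \<open>0 < d\<close> by (fastforce simp: B_def)
    ultimately have step: "mb_step b (mb_config k (u, D))
        = (if b then add_mset u (add_mset (x - 1) (B - {#x#})) else add_mset (u - 1) B)"
      unfolding config x_def using False by (intro mb_step_add_mset_min) auto
    show ?thesis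
    proof (cases "D = 0")
      case True
      then have "B = replicate_mset d u"
        using balanced_mset_eq_replicate_mset_iff[OF \<open>0 < d\<close>] by (simp add: B_def)
      with \<open>0 < d\<close> have "mb_step b (mb_config k (u, D)) = add_mset (u - 1) B"
        unfolding step by (cases d) (simp_all add: x_def add_mset_commute)
      moreover have "d * (u - 1) + d = d * u"
        using False by (cases u) simp_all
      ultimately show ?thesis
        using False True by (simp add: k B_def)
    next
      case False
      have "add_mset (x - 1) (B - {#x#}) = balanced_mset d (d * u + (D - 1))"
        using balanced_mset_remove_Max[OF \<open>0 < d\<close>, of "d * u + D"] False
        by (simp add: x_def B_def)
      moreover have "balanced_mset d (d * (u - 1) + (D + d)) = B"
        using \<open>u \<noteq> 0\<close> by (cases u) (simp_all add: B_def algebra_simps)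
      ultimately show ?thesis
        unfolding step using False \<open>u \<noteq> 0\<close> by (cases b) (simp_all add: B_def k)
    qed
  qed
qed

lemma foldl_mb_step_mb_config:
  assumes "2 \<le> k"
  shows "foldl (\<lambda>M b. mb_step b M) (mb_config k s) xs = mb_config k (foldl (excess_step k) s xs)"
proof (induction xs arbitrary: s)
  case (Cons b xs)
  then show ?case
    using mb_step_mb_config[OF assms] by (metis foldl_Cons prod.collapse)
qed simp

lemma mb_config_eq_replicate_mset_iff:
  assumes "2 \<le> k"
  shows "mb_config k (u, D) = replicate_mset k v \<longleftrightarrow> u = v \<and> D = 0"
proof -
  obtain d where k: "k = Suc d" and "0 < d"
    using assms by (cases k) auto
  have "mb_config k (u, D) = replicate_mset k v \<longleftrightarrow>
      u = v \<and> balanced_mset d (d * u + D) = replicate_mset d v"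
  proof
    assume "mb_config k (u, D) = replicate_mset k v"
    then have eq: "add_mset u (balanced_mset d (d * u + D)) = add_mset v (replicate_mset d v)"
      by (simp add: k)
    then have "u \<in># add_mset v (replicate_mset d v)"
      by (metis union_single_eq_member)
    then have "u = v"
      by (auto split: if_splits)
    with eq show "u = v \<and> balanced_mset d (d * u + D) = replicate_mset d v"
      by simp
  qed (auto simp: k)
  also have "\<dots> \<longleftrightarrow> u = v \<and> D = 0"
    using balanced_mset_eq_replicate_mset_iff[OF \<open>0 < d\<close>] by auto
  finally show ?thesis .
qed

lemma mb_state_eq_mb_config:
  assumes "2 \<le> k"
  shows "mb_state k n \<omega> t = mb_config k (foldl (excess_step k) (n, 0) (take t \<omega>))"
  using foldl_mb_step_mb_config[OF assms] mb_config_eq_replicate_mset_iff[OF assms]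
  unfolding mb_state_def by metis

lemma mb_hits_iff_excess_walk:
  assumes "2 \<le> k"
  shows "mb_hits k n \<omega> i \<longleftrightarrow> foldl (excess_step k) (n, 0) (take (k * i) \<omega>) = (n - i, 0)"
  using mb_config_eq_replicate_mset_iff[OF assms]
  unfolding mb_hits_def mb_state_eq_mb_config[OF assms] by (metis prod.collapse)

section \<open>The excess walk and returns to the diagonal\<close>

lemma foldl_excess_step_exhausted: "foldl (excess_step k) (0, D) xs = (0, D)"
  by (induction xs) simp_all

lemma foldl_excess_step_conserved:
  assumes "1 \<le> k" and "foldl (excess_step k) s xs = (u, D)" and "1 \<le> u"
  shows "k * u + D + length xs = k * fst s + snd s"
  using assms(2)
proof (induction xs arbitrary: s)
  case (Cons b xs)
  obtain u0 D0 where s: "s = (u0, D0)"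
    by fastforce
  have "u0 \<noteq> 0"
  proof
    assume "u0 = 0"
    then have "foldl (excess_step k) s (b # xs) = (0, D0)"
      by (simp add: s foldl_excess_step_exhausted)
    with Cons.prems \<open>1 \<le> u\<close> show False
      by simp
  qed
  then have "k * fst (excess_step k s b) + snd (excess_step k s b) + 1 = k * u0 + D0"
    using \<open>1 \<le> k\<close> by (cases u0) (auto simp: s algebra_simps)
  with Cons show ?case
    by (simp add: s)
qed simp

definition nonempty_diagonal :: "nat \<times> nat \<Rightarrow> bool" where
  "nonempty_diagonal s \<longleftrightarrow> snd s = 0 \<and> 1 \<le> fst s"

lemma nonempty_diagonal_excess_walk_time:
  assumes "1 \<le> k" and "1 \<le> t" and "t \<le> length \<omega>"
    and "nonempty_diagonal (foldl (excess_step k) (n, 0) (take t \<omega>))"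
  obtains j where "j \<in> {1..n - 1}" and "t = k * j"
    and "foldl (excess_step k) (n, 0) (take t \<omega>) = (n - j, 0)"
proof -
  obtain u where walk: "foldl (excess_step k) (n, 0) (take t \<omega>) = (u, 0)" and "1 \<le> u"
    using assms(4) unfolding nonempty_diagonal_def by (metis prod.collapse)
  then have "k * u + t = k * n"
    using foldl_excess_step_conserved[OF \<open>1 \<le> k\<close> walk] \<open>t \<le> length \<omega>\<close> by simp
  then have "t = k * (n - u)"
    by (simp add: diff_mult_distrib2)
  have "k * u < k * n"
    using \<open>k * u + t = k * n\<close> \<open>1 \<le> t\<close> by linarith
  then have "u < n"
    by simp
  with walk \<open>1 \<le> u\<close> \<open>t = k * (n - u)\<close> show ?thesis
    by (intro that[of "n - u"]) auto
qed

fun first_visit :: "('s \<Rightarrow> 'a \<Rightarrow> 's) \<Rightarrow> ('s \<Rightarrow> bool) \<Rightarrow> 's \<Rightarrow> 'a list \<Rightarrow> nat option" where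
  "first_visit f P s [] = None"
| "first_visit f P s (a # xs) =
     (if P (f s a) then Some 1 else map_option Suc (first_visit f P (f s a) xs))"

lemma first_visit_eq_Some_iff:
  "first_visit f P s xs = Some m \<longleftrightarrow>
     m \<in> {1..length xs} \<and> P (foldl f s (take m xs)) \<and>
     (\<forall>t\<in>{1..<m}. \<not> P (foldl f s (take t xs)))"
proof (induction xs arbitrary: s m)
  case (Cons a xs)
  show ?case
  proof (cases "P (f s a)")
    case True
    then show ?thesis
      by (auto dest: bspec[of _ _ 1])
  next
    case False
    have shift: "(\<forall>t\<in>{1..<Suc m'}. \<not> P (foldl f s (take t (a # xs)))) \<longleftrightarrow>
        (\<forall>t\<in>{1..<m'}. \<not> P (foldl f (f s a) (take t xs)))" for m'
    proof -
      have "{1..<Suc m'} \<subseteq> insert 1 (Suc ` {1..<m'})" "Suc ` {1..<m'} \<subseteq> {1..<Suc m'}"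
        by (auto simp: image_iff)
      then show ?thesis
        using False by fastforce
    qed
    show ?thesis
    proof (cases m)
      case (Suc m')
      have "first_visit f P s (a # xs) = Some m \<longleftrightarrow> first_visit f P (f s a) xs = Some m'"
        using False by (auto simp: Suc)
      also have "\<dots> \<longleftrightarrow> m' \<in> {1..length xs} \<and> P (foldl f (f s a) (take m' xs)) \<and>
          (\<forall>t\<in>{1..<m'}. \<not> P (foldl f (f s a) (take t xs)))"
        by (rule Cons.IH)
      also have "\<dots> \<longleftrightarrow> m \<in> {1..length (a # xs)} \<and> P (foldl f s (take m (a # xs))) \<and>
          (\<forall>t\<in>{1..<m}. \<not> P (foldl f s (take t (a # xs))))"
        unfolding Suc shift using False by (cases m') auto
      finally show ?thesis .
    qed (use False in auto)
  qed
qed simp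

lemma mb_Y_range:
  assumes "1 \<le> n"
  shows "mb_Y k n \<omega> \<in> {1..n}"
proof (cases "\<exists>i\<in>{1..n - 1}. mb_hits k n \<omega> i")
  case True
  then have "(LEAST i. i \<in> {1..n - 1} \<and> mb_hits k n \<omega> i) \<in> {1..n - 1}"
    using LeastI_ex[of "\<lambda>i. i \<in> {1..n - 1} \<and> mb_hits k n \<omega> i"] by blast
  with True show ?thesis
    by (auto simp: mb_Y_def)
qed (use assms in \<open>simp add: mb_Y_def\<close>)

lemma mb_Y_eq_iff:
  assumes "i \<in> {1..n - 1}"
  shows "mb_Y k n \<omega> = i \<longleftrightarrow> mb_hits k n \<omega> i \<and> (\<forall>j\<in>{1..<i}. \<not> mb_hits k n \<omega> j)"
proof
  assume Y: "mb_Y k n \<omega> = i"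
  then have ex: "\<exists>j\<in>{1..n - 1}. mb_hits k n \<omega> j"
    using assms by (auto simp: mb_Y_def split: if_splits)
  then have least: "(LEAST j. j \<in> {1..n - 1} \<and> mb_hits k n \<omega> j) = i"
    using Y by (simp add: mb_Y_def)
  have "mb_hits k n \<omega> i"
    using LeastI_ex[of "\<lambda>j. j \<in> {1..n - 1} \<and> mb_hits k n \<omega> j"] ex
    unfolding least by blast
  moreover have "\<not> mb_hits k n \<omega> j" if "j \<in> {1..<i}" for j
    using not_less_Least[of j "\<lambda>j. j \<in> {1..n - 1} \<and> mb_hits k n \<omega> j"] that assms
    unfolding least by auto
  ultimately show "mb_hits k n \<omega> i \<and> (\<forall>j\<in>{1..<i}. \<not> mb_hits k n \<omega> j)"
    by blast
next
  assume first_hit: "mb_hits k n \<omega> i \<and> (\<forall>j\<in>{1..<i}. \<not> mb_hits k n \<omega> j)"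
  with assms have "\<exists>j\<in>{1..n - 1}. mb_hits k n \<omega> j"
    by blast
  moreover from first_hit assms have "(LEAST j. j \<in> {1..n - 1} \<and> mb_hits k n \<omega> j) = i"
    by (intro Least_equality) (auto simp: not_less[symmetric])
  ultimately show "mb_Y k n \<omega> = i"
    by (simp add: mb_Y_def)
qed

lemma mb_hits_iff_nonempty_diagonal:
  assumes "2 \<le> k" and "j \<in> {1..n - 1}" and "length \<omega> = k * (n - 1)"
  shows "mb_hits k n \<omega> j \<longleftrightarrow> nonempty_diagonal (foldl (excess_step k) (n, 0) (take (k * j) \<omega>))"
proof
  assume "mb_hits k n \<omega> j"
  with assms show "nonempty_diagonal (foldl (excess_step k) (n, 0) (take (k * j) \<omega>))"
    by (auto simp: mb_hits_iff_excess_walk nonempty_diagonal_def)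
next
  assume diag: "nonempty_diagonal (foldl (excess_step k) (n, 0) (take (k * j) \<omega>))"
  have "1 \<le> k" "1 \<le> k * j" "k * j \<le> length \<omega>"
    using assms by auto
  then obtain j' where "j' \<in> {1..n - 1}" "k * j = k * j'"
    "foldl (excess_step k) (n, 0) (take (k * j) \<omega>) = (n - j', 0)"
    using diag by (rule nonempty_diagonal_excess_walk_time)
  with assms(1) show "mb_hits k n \<omega> j"
    by (simp add: mb_hits_iff_excess_walk)
qed

lemma no_mb_hits_before_iff:
  assumes "2 \<le> k" and i: "i \<in> {1..n - 1}" and len: "length \<omega> = k * (n - 1)"
  shows "(\<forall>j\<in>{1..<i}. \<not> mb_hits k n \<omega> j) \<longleftrightarrow>
    (\<forall>t\<in>{1..<k * i}. \<not> nonempty_diagonal (foldl (excess_step k) (n, 0) (take t \<omega>)))"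
    (is "?no_hit \<longleftrightarrow> (\<forall>t\<in>_. \<not> ?diag t)")
proof
  assume ?no_hit
  show "\<forall>t\<in>{1..<k * i}. \<not> ?diag t"
  proof (intro ballI notI)
    fix t
    assume t: "t \<in> {1..<k * i}" and "?diag t"
    have "k * i \<le> k * (n - 1)"
      using i by simp
    moreover have "t < k * i"
      using t by simp
    ultimately have "t \<le> length \<omega>"
      using len by linarith
    with \<open>2 \<le> k\<close> t \<open>?diag t\<close> obtain j where "j \<in> {1..n - 1}" "t = k * j"
      using nonempty_diagonal_excess_walk_time[of k t \<omega> n] by auto
    moreover from t \<open>t = k * j\<close> have "j \<in> {1..<i}"
      by auto
    with \<open>?no_hit\<close> have "\<not> mb_hits k n \<omega> j"
      by blast
    ultimately show False
      using mb_hits_iff_nonempty_diagonal[OF \<open>2 \<le> k\<close> _ len] \<open>?diag t\<close> by simp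
  qed
next
  assume "\<forall>t\<in>{1..<k * i}. \<not> ?diag t"
  with i \<open>2 \<le> k\<close> show ?no_hit
    using mb_hits_iff_nonempty_diagonal[OF \<open>2 \<le> k\<close> _ len] by auto
qed

lemma mb_Y_eq_iff_first_visit:
  assumes "2 \<le> k" and i: "i \<in> {1..n - 1}" and len: "length \<omega> = k * (n - 1)"
  shows "mb_Y k n \<omega> = i \<longleftrightarrow>
    first_visit (excess_step k) nonempty_diagonal (n, 0) \<omega> = Some (k * i)"
proof -
  have "k * i \<in> {1..length \<omega>}"
    using i len \<open>2 \<le> k\<close> by auto
  then show ?thesis
    using mb_Y_eq_iff[OF i] mb_hits_iff_nonempty_diagonal[OF assms] no_mb_hits_before_iff[OF assms]
    by (simp add: first_visit_eq_Some_iff)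
qed

section \<open>First passage probabilities\<close>

lemma measure_bind_pmf:
  "measure_pmf.prob (bind_pmf M f) A = measure_pmf.expectation M (\<lambda>x. measure_pmf.prob (f x) A)"
  unfolding measure_pmf_bind
  by (rule measure_pmf.measure_bind[where N = "count_space UNIV"])
     (auto simp: measure_subprob)

lemma measure_choice_pmf_Suc:
  assumes "0 \<le> p" and "p \<le> 1"
  shows "measure_pmf.prob (choice_pmf p (Suc N)) A
     = p * measure_pmf.prob (choice_pmf p N) {\<omega>. True # \<omega> \<in> A}
       + (1 - p) * measure_pmf.prob (choice_pmf p N) {\<omega>. False # \<omega> \<in> A}"
  using assms by (simp add: measure_bind_pmf vimage_def)

lemma length_of_set_pmf_choice_pmf: "\<omega> \<in> set_pmf (choice_pmf p N) \<Longrightarrow> length \<omega> = N"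
  by (induction N arbitrary: \<omega>) auto

lemma finite_set_pmf_choice_pmf: "finite (set_pmf (choice_pmf p N))"
  using finite_lists_length_eq[of "UNIV :: bool set" N]
  by (rule finite_subset[rotated]) (auto dest: length_of_set_pmf_choice_pmf)

definition ballot :: "nat \<Rightarrow> nat \<Rightarrow> nat \<Rightarrow> real" where
  "ballot k h j = real h / real (k * j + h) * real ((k * j + h) choose j)"

lemma ballot_0 [simp]: "ballot k h 0 = of_bool (0 < h)"
  by (simp add: ballot_def)

lemma ballot_height_0 [simp]: "ballot k 0 j = 0"
  by (simp add: ballot_def)

lemma ballot_Suc_Suc:
  assumes "1 \<le> k"
  shows "ballot k (Suc h) (Suc j) = ballot k h (Suc j) + ballot k (h + k) j"
proof -
  define N where "N = k * Suc j + Suc h"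
  define C where "C = real (N choose Suc j)"
  have "Suc j \<le> k * Suc j"
    using mult_le_mono1[OF assms, of "Suc j"] by simp
  then have "Suc j < N"
    unfolding N_def by linarith
  then have N1: "real (N - 1) = real N - 1" and "1 < real N"
    by simp_all
  have "(real j + 1) * C = real N * real ((N - 1) choose j)"
    using arg_cong[OF binomial_absorption[of j N], of real] by (simp add: C_def algebra_simps)
  then have B0: "real ((N - 1) choose j) = (real j + 1) * C / real N"
    using \<open>1 < real N\<close> by (simp add: field_simps)
  have "real (N - Suc j) = real N - real j - 1"
    using \<open>Suc j < N\<close> by simp
  then have "(real N - real j - 1) * C = real N * real ((N - 1) choose Suc j)"
    using arg_cong[OF binomial_absorb_comp[of N "Suc j"], of real]
    by (simp only: C_def of_nat_mult)
  then have B1: "real ((N - 1) choose Suc j) = (real N - real j - 1) * C / real N"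
    using \<open>1 < real N\<close> by (simp add: field_simps)
  have NS: "k * Suc j + h = N - 1" and NJ: "k * j + (h + k) = N - 1"
    by (simp_all add: N_def)
  have "ballot k h (Suc j) + ballot k (h + k) j
      = real h / (real N - 1) * ((real N - real j - 1) * C / real N)
        + (real h + real k) / (real N - 1) * ((real j + 1) * C / real N)"
    unfolding ballot_def NS NJ B0 B1 N1 by simp
  also have "\<dots> = (real h * (real N - real j - 1) + (real h + real k) * (real j + 1)) * C
      / ((real N - 1) * real N)"
    by (simp add: field_simps) (simp add: add_divide_distrib[symmetric] algebra_simps)
  also have "real h * (real N - real j - 1) + (real h + real k) * (real j + 1)
      = (real h + 1) * (real N - 1)"
    by (simp add: N_def algebra_simps)
  also have "(real h + 1) * (real N - 1) * C / ((real N - 1) * real N) = ballot k (Suc h) (Suc j)"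
    using \<open>1 < real N\<close> by (simp add: ballot_def C_def N_def)
  finally show ?thesis ..
qed

(* The probability that the walk started at height h, with steps -1 (probability p) and
  +(k - 1) (probability 1 - p), first reaches 0 at time m.  Such a path makes
  j = (m - h) div k up-steps, and by the hitting time theorem a fraction h / m of the
  binom(m, j) orderings of its steps first reaches 0 exactly at the end. *)
definition passage_prob :: "nat \<Rightarrow> real \<Rightarrow> nat \<Rightarrow> nat \<Rightarrow> real" where
  "passage_prob k p h m =
     (if h = 0 then of_bool (m = 0)
      else if h \<le> m \<and> k dvd (m - h)
      then ballot k h ((m - h) div k) * p ^ (m - (m - h) div k) * (1 - p) ^ ((m - h) div k)
      else 0)"

lemma passage_prob_height_0 [simp]: "passage_prob k p 0 m = of_bool (m = 0)"
  by (simp add: passage_prob_def)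

lemma passage_prob_below: "m < h \<Longrightarrow> passage_prob k p h m = 0"
  by (simp add: passage_prob_def)

lemma passage_prob_self: "passage_prob k p h h = p ^ h"
  by (simp add: passage_prob_def)

lemma passage_prob_at:
  assumes "1 \<le> k" and "0 < k * j + h"
  shows "passage_prob k p h (k * j + h) = ballot k h j * p ^ ((k - 1) * j + h) * (1 - p) ^ j"
proof (cases "h = 0")
  case False
  have "k * j + h - j = (k - 1) * j + h"
    using assms by (simp add: diff_mult_distrib)
  with False assms show ?thesis
    by (simp add: passage_prob_def)
qed (use assms in \<open>simp add: passage_prob_def\<close>)

lemma passage_prob_off:
  assumes "\<forall>j. m \<noteq> k * j + h"
  shows "passage_prob k p h m = 0"
proof (cases "h = 0")
  case False
  have "\<not> (h \<le> m \<and> k dvd (m - h))"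
  proof
    assume "h \<le> m \<and> k dvd (m - h)"
    then obtain c where "m = k * c + h"
      by (metis dvdE le_add_diff_inverse2)
    with assms show False
      by blast
  qed
  with False show ?thesis
    by (auto simp: passage_prob_def)
qed (use assms[rule_format, of 0] in \<open>simp add: passage_prob_def\<close>)

lemma passage_prob_Suc_Suc:
  assumes "1 \<le> k"
  shows "passage_prob k p (Suc h) (Suc m)
    = p * passage_prob k p h m + (1 - p) * passage_prob k p (h + k) m"
proof (cases "\<exists>j. m = k * j + h")
  case True
  then obtain j where m: "m = k * j + h"
    by blast
  define e where "e = (k - 1) * j + h"
  have lhs: "passage_prob k p (Suc h) (Suc m) = ballot k (Suc h) j * p ^ Suc e * (1 - p) ^ j"
    using passage_prob_at[OF assms, of j "Suc h"] by (simp add: m e_def)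
  show ?thesis
  proof (cases j)
    case 0
    then show ?thesis
      using assms by (simp add: lhs m e_def passage_prob_self passage_prob_below)
  next
    case (Suc j')
    obtain k' where k: "k = Suc k'"
      using assms not0_implies_Suc by fastforce
    have T1: "passage_prob k p h m = ballot k h j * p ^ e * (1 - p) ^ j"
      unfolding m e_def using assms Suc by (intro passage_prob_at) auto
    have "m = k * j' + (h + k)" "(k - 1) * j' + (h + k) = Suc e"
      by (simp_all add: m Suc e_def k)
    then have T2: "passage_prob k p (h + k) m = ballot k (h + k) j' * p ^ Suc e * (1 - p) ^ j'"
      using passage_prob_at[OF assms, of j' "h + k"] assms by simp
    show ?thesis
      by (simp add: lhs T1 T2 Suc ballot_Suc_Suc[OF assms] algebra_simps)
  qed
next
  case False
  have "Suc m \<noteq> k * j + Suc h" for j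
    using False by auto
  moreover have "m \<noteq> k * j + (h + k)" for j
  proof
    assume "m = k * j + (h + k)"
    then have "m = k * Suc j + h"
      by simp
    with False show False
      by blast
  qed
  ultimately show ?thesis
    using False by (simp add: passage_prob_off)
qed

lemma first_visit_excess_step_exhausted:
  "first_visit (excess_step k) nonempty_diagonal (0, D) xs = None"
  by (induction xs) (simp_all add: nonempty_diagonal_def)

lemma measure_first_visit_excess_step_Suc:
  assumes "0 \<le> p" and "p \<le> 1" and "1 \<le> k" and "u \<noteq> 0"
  shows "measure_pmf.prob (choice_pmf p (Suc N))
      {\<omega>. first_visit (excess_step k) nonempty_diagonal (u, Suc h) \<omega> = Some (Suc m)}
    = p * (if h = 0 then of_bool (m = 0) else measure_pmf.prob (choice_pmf p N)
        {\<omega>. first_visit (excess_step k) nonempty_diagonal (u, h) \<omega> = Some m})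
      + (1 - p) * measure_pmf.prob (choice_pmf p N)
        {\<omega>. first_visit (excess_step k) nonempty_diagonal (u - 1, h + k) \<omega> = Some m}"
proof -
  let ?F = "first_visit (excess_step k) nonempty_diagonal"
  have "{\<omega>. True # \<omega> \<in> {\<omega>. ?F (u, Suc h) \<omega> = Some (Suc m)}}
      = (if h = 0 then (if m = 0 then UNIV else {}) else {\<omega>. ?F (u, h) \<omega> = Some m})"
    using assms by (auto simp: nonempty_diagonal_def)
  moreover have "{\<omega>. False # \<omega> \<in> {\<omega>. ?F (u, Suc h) \<omega> = Some (Suc m)}}
      = {\<omega>. ?F (u - 1, h + k) \<omega> = Some m}"
    using assms by (auto simp: nonempty_diagonal_def)
  ultimately show ?thesis
    unfolding measure_choice_pmf_Suc[OF assms(1,2)] by simp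
qed

(* The hypothesis m + k <= k * u + h means that the smallest box cannot be emptied before
  time m, so the freezing of excess_step at u = 0 never interferes. *)
lemma measure_first_visit_excess_step:
  assumes "0 \<le> p" and "p \<le> 1" and "1 \<le> k"
    and "1 \<le> h" and "m + k \<le> k * u + h" and "m \<le> N"
  shows "measure_pmf.prob (choice_pmf p N)
      {\<omega>. first_visit (excess_step k) nonempty_diagonal (u, h) \<omega> = Some m}
    = passage_prob k p h m"
  using assms(4-)
proof (induction N arbitrary: u h m)
  case 0
  then show ?case
    by (simp add: passage_prob_below)
next
  case (Suc N)
  obtain h' where h: "h = Suc h'"
    using Suc.prems(1) not0_implies_Suc by fastforce
  consider "u = 0" | "m = 0" | m' where "u \<noteq> 0" "m = Suc m'"
    using not0_implies_Suc by blast
  then show ?case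
  proof cases
    case 1
    with Suc.prems \<open>1 \<le> k\<close> show ?thesis
      by (simp add: first_visit_excess_step_exhausted passage_prob_below)
  next
    case 2
    with first_visit_eq_Some_iff[of "excess_step k" nonempty_diagonal] show ?thesis
      by (simp add: h passage_prob_below)
  next
    case 3
    have "m' + k \<le> k * (u - 1) + (h' + k)"
      using Suc.prems 3 by (simp add: h diff_mult_distrib2)
    with 3 Suc.IH[of h' m' u] Suc.IH[of "h' + k" m' "u - 1"] Suc.prems \<open>1 \<le> k\<close> show ?thesis
      unfolding h \<open>m = Suc m'\<close> measure_first_visit_excess_step_Suc[OF assms(1-3) \<open>u \<noteq> 0\<close>]
        passage_prob_Suc_Suc[OF assms(3)]
      by (cases "h' = 0") simp_all
  qed
qed

lemma ballot_eq_s_coef: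
  assumes "2 \<le> k" and "1 \<le> i"
  shows "ballot k (k - 1) (i - 1) = s_coef k i"
proof -
  have "k * (i - 1) + (k - 1) = k * i - 1"
    using assms by (cases i) simp_all
  moreover have "real (k * i - 1) = real (k * i) - 1" "real (k - 1) = real k - 1"
    using assms by simp_all
  ultimately show ?thesis
    by (simp add: ballot_def s_coef_def)
qed

lemma measure_mb_Y_eq:
  assumes "0 \<le> p" and "p \<le> 1" and "2 \<le> k" and i: "i \<in> {1..n - 1}"
  shows "measure_pmf.prob (choice_pmf p (k * (n - 1))) {\<omega>. mb_Y k n \<omega> = i}
    = s_coef k i * p ^ ((k - 1) * i) * (1 - p) ^ (i - 1)"
proof -
  let ?F = "first_visit (excess_step k) nonempty_diagonal"
  let ?M = "choice_pmf p (k * (n - 1))"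
  define c where "c = k * (i - 1) + (k - 1)"
  have ki: "k * i = Suc c"
    using assms by (cases i) (simp_all add: c_def)
  have "k * i \<le> k * (n - 1)"
    using i by simp
  then obtain N where N: "k * (n - 1) = Suc N" and "c \<le> N"
    using ki by (metis Suc_le_D Suc_le_mono)
  have "{\<omega>. mb_Y k n \<omega> = i} \<inter> set_pmf ?M = {\<omega>. ?F (n, 0) \<omega> = Some (k * i)} \<inter> set_pmf ?M"
    using mb_Y_eq_iff_first_visit[OF \<open>2 \<le> k\<close> i] length_of_set_pmf_choice_pmf by blast
  then have "measure_pmf.prob ?M {\<omega>. mb_Y k n \<omega> = i}
      = measure_pmf.prob ?M {\<omega>. ?F (n, 0) \<omega> = Some (Suc c)}"
    unfolding ki by (metis measure_Int_set_pmf)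
  also have "\<dots> = measure_pmf.prob (choice_pmf p N) {\<omega>. ?F (n - 1, k - 1) \<omega> = Some c}"
  proof -
    have "?F (n, 0) (b # \<omega>) = map_option Suc (?F (n - 1, k - 1) \<omega>)" for b \<omega>
      using assms by (auto simp: nonempty_diagonal_def)
    then have "{\<omega>. b # \<omega> \<in> {\<omega>. ?F (n, 0) \<omega> = Some (Suc c)}}
        = {\<omega>. ?F (n - 1, k - 1) \<omega> = Some c}" for b
      by auto
    then show ?thesis
      unfolding N measure_choice_pmf_Suc[OF assms(1,2)] by (simp add: algebra_simps)
  qed
  also have "\<dots> = passage_prob k p (k - 1) c"
    using assms N ki \<open>c \<le> N\<close> by (intro measure_first_visit_excess_step) simp_all
  also have "\<dots> = ballot k (k - 1) (i - 1) * p ^ ((k - 1) * (i - 1) + (k - 1)) * (1 - p) ^ (i - 1)"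
    unfolding c_def using assms by (intro passage_prob_at) auto
  also have "(k - 1) * (i - 1) + (k - 1) = (k - 1) * i"
    using assms by (cases i) simp_all
  finally show ?thesis
    using ballot_eq_s_coef assms by simp
qed

section \<open>Expectation and generating function\<close>

lemma expectation_eq_bound_minus_sum:
  fixes M :: "'a pmf" and Y :: "'a \<Rightarrow> nat"
  assumes "finite (set_pmf M)" and "\<And>\<omega>. \<omega> \<in> set_pmf M \<Longrightarrow> Y \<omega> \<in> {1..n}"
  shows "measure_pmf.expectation M (\<lambda>\<omega>. real (Y \<omega>))
    = real n - (\<Sum>i=1..n-1. real (n - i) * measure_pmf.prob M {\<omega>. Y \<omega> = i})"
proof -
  let ?deficit = "\<lambda>\<omega>. \<Sum>i=1..n-1. real (n - i) * indicator {\<omega>. Y \<omega> = i} \<omega>"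
  have "real (Y \<omega>) = real n - ?deficit \<omega>" if "\<omega> \<in> set_pmf M" for \<omega>
  proof -
    have "?deficit \<omega> = (\<Sum>i=1..n-1. if i = Y \<omega> then real (n - i) else 0)"
      by (intro sum.cong) (auto simp: indicator_def)
    also have "\<dots> = real (n - Y \<omega>)"
      using assms(2)[OF that] by (cases "Y \<omega> = n") auto
    finally show ?thesis
      using assms(2)[OF that] by simp
  qed
  then have "measure_pmf.expectation M (\<lambda>\<omega>. real (Y \<omega>))
      = measure_pmf.expectation M (\<lambda>\<omega>. real n - ?deficit \<omega>)"
    by (intro integral_cong_AE) (simp_all add: AE_measure_pmf_iff)
  also have "\<dots> = real n - measure_pmf.expectation M ?deficit"
    using Bochner_Integration.integral_diff[OF integrable_measure_pmf_finite[OF assms(1)]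
        integrable_measure_pmf_finite[OF assms(1)], of "\<lambda>_. real n" ?deficit]
    by simp
  also have "measure_pmf.expectation M ?deficit
      = (\<Sum>i=1..n-1. measure_pmf.expectation M (\<lambda>\<omega>. real (n - i) * indicator {\<omega>. Y \<omega> = i} \<omega>))"
    by (rule Bochner_Integration.integral_sum[OF integrable_measure_pmf_finite[OF assms(1)]])
  finally show ?thesis
    by simp
qed

lemma mb_R_eq:
  assumes "2 \<le> k" and "0 < p" and "p < 1" and "1 \<le> n"
  shows "mb_R k n p
    = real n - 1 / (1 - p) * (\<Sum>i=1..n-1. real (n - i) * s_coef k i * (p ^ (k - 1) * (1 - p)) ^ i)"
proof -
  have "mb_R k n p
      = real n - (\<Sum>i=1..n-1. real (n - i) * (s_coef k i * p ^ ((k - 1) * i) * (1 - p) ^ (i - 1)))"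
    unfolding mb_R_def
    using expectation_eq_bound_minus_sum[OF finite_set_pmf_choice_pmf mb_Y_range[OF \<open>1 \<le> n\<close>]]
      measure_mb_Y_eq assms by simp
  also have "(\<Sum>i=1..n-1. real (n - i) * (s_coef k i * p ^ ((k - 1) * i) * (1 - p) ^ (i - 1)))
      = 1 / (1 - p) * (\<Sum>i=1..n-1. real (n - i) * s_coef k i * (p ^ (k - 1) * (1 - p)) ^ i)"
    unfolding sum_distrib_left
  proof (intro sum.cong refl)
    fix i
    assume "i \<in> {1..n - 1}"
    then have "(1 - p) ^ i = (1 - p) * (1 - p) ^ (i - 1)"
      by (cases i) simp_all
    then have "(p ^ (k - 1) * (1 - p)) ^ i = (1 - p) * (p ^ ((k - 1) * i) * (1 - p) ^ (i - 1))"
      by (simp add: power_mult_distrib power_mult)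
    with \<open>p < 1\<close> show "real (n - i) * (s_coef k i * p ^ ((k - 1) * i) * (1 - p) ^ (i - 1))
        = 1 / (1 - p) * (real (n - i) * s_coef k i * (p ^ (k - 1) * (1 - p)) ^ i)"
      by simp
  qed
  finally show ?thesis .
qed

lemma fps_nth_X_div_one_minus_X_squared_mult:
  fixes f :: "'a :: field fps"
  shows "fps_nth (fps_X / (1 - fps_X) ^ 2 * f) n = (\<Sum>i\<le>n. of_nat (n - i) * fps_nth f i)"
proof -
  have "fps_nth ((1 - fps_X) ^ 2 :: 'a fps) 0 \<noteq> 0"
    by (simp add: power2_eq_square)
  then have "fps_X / (1 - fps_X) ^ 2 = fps_X * inverse ((1 - fps_X) ^ 2 :: 'a fps)"
    by (simp add: fps_divide_unit)
  also have "\<dots> = fps_X * Abs_fps (\<lambda>n. of_nat (n + 1))"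
    by (simp add: fps_one_over_one_minus_fps_X_squared)
  also have "\<dots> = Abs_fps of_nat"
    by (rule fps_ext) simp
  finally show ?thesis
    by (simp add: fps_mult_nth atLeast0AtMost mult.commute)
qed

lemma fps_eq_X_div_one_minus_X_squared_mult:
  fixes a :: "nat \<Rightarrow> 'a :: field" and B :: "'a fps"
  assumes "fps_nth B 0 = 0"
    and "\<And>n. 1 \<le> n \<Longrightarrow> a n = of_nat n - c * (\<Sum>i=1..n-1. of_nat (n - i) * fps_nth B i)"
  shows "Abs_fps (\<lambda>n. if n = 0 then 0 else a n) = fps_X / (1 - fps_X) ^ 2 * (1 - fps_const c * B)"
proof (rule fps_ext)
  fix n
  have nth: "fps_nth (1 - fps_const c * B) i = (if i = 0 then 1 else 0) - c * fps_nth B i" for i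
    by simp
  have "(\<Sum>i\<le>n. of_nat (n - i) * (if i = 0 then 1 else 0))
      = (\<Sum>i\<le>n. if i = 0 then of_nat n else 0 :: 'a)"
    by (rule sum.cong) auto
  then have head: "(\<Sum>i\<le>n. of_nat (n - i) * (if i = 0 then 1 else 0)) = (of_nat n :: 'a)"
    by simp
  have tail: "(\<Sum>i\<le>n. of_nat (n - i) * fps_nth B i) = (\<Sum>i=1..n-1. of_nat (n - i) * fps_nth B i)"
  proof (rule sum.mono_neutral_right)
    show "\<forall>i\<in>{..n} - {1..n - 1}. of_nat (n - i) * fps_nth B i = 0"
    proof
      fix i
      assume "i \<in> {..n} - {1..n - 1}"
      then have "i = 0 \<or> i = n"
        by auto
      with assms(1) show "of_nat (n - i) * fps_nth B i = 0"
        by auto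
    qed
  qed auto
  have "fps_nth (fps_X / (1 - fps_X) ^ 2 * (1 - fps_const c * B)) n
      = (\<Sum>i\<le>n. of_nat (n - i) * ((if i = 0 then 1 else 0) - c * fps_nth B i))"
    by (simp only: fps_nth_X_div_one_minus_X_squared_mult nth)
  also have "\<dots> = (\<Sum>i\<le>n. of_nat (n - i) * (if i = 0 then 1 else 0))
      - c * (\<Sum>i\<le>n. of_nat (n - i) * fps_nth B i)"
    by (simp only: right_diff_distrib sum_subtractf sum_distrib_left mult.left_commute)
  also have "\<dots> = of_nat n - c * (\<Sum>i=1..n-1. of_nat (n - i) * fps_nth B i)"
    by (simp only: head tail)
  finally have "fps_nth (fps_X / (1 - fps_X) ^ 2 * (1 - fps_const c * B)) n
      = of_nat n - c * (\<Sum>i=1..n-1. of_nat (n - i) * fps_nth B i)" .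
  then show "fps_nth (Abs_fps (\<lambda>n. if n = 0 then 0 else a n)) n
      = fps_nth (fps_X / (1 - fps_X) ^ 2 * (1 - fps_const c * B)) n"
    using assms(2)[of n] by (cases "n = 0") simp_all
qed

theorem theorem5p1:
  fixes k :: nat and p :: real
  assumes "k \<ge> 2" and "0 < p" and "p < 1"
  defines "q \<equiv> 1 - p"
  shows "mb_R k 1 p = 1
    \<and> (\<forall>n\<ge>2. mb_R k n p
          = real n - (1 / q) * (\<Sum>i=1..n-1. real (n - i) * s_coef k i * (p ^ (k - 1) * q) ^ i))
    \<and> Abs_fps (\<lambda>n. if n = 0 then 0 else mb_R k n p)
         = fps_X / (1 - fps_X)^2 * (1 - fps_const (1 / q) * S_fps k (p ^ (k - 1) * q))"
proof -
  have R: "mb_R k n p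
      = real n - (1 / q) * (\<Sum>i=1..n-1. real (n - i) * s_coef k i * (p ^ (k - 1) * q) ^ i)"
    if "1 \<le> n" for n
    using mb_R_eq[OF assms(1-3) that] by (simp add: q_def)
  have "(\<Sum>i=1..n-1. real (n - i) * s_coef k i * c ^ i)
      = (\<Sum>i=1..n-1. real (n - i) * fps_nth (S_fps k c) i)" for n c
    by (intro sum.cong) (auto simp: S_fps_def)
  then have "Abs_fps (\<lambda>n. if n = 0 then 0 else mb_R k n p)
      = fps_X / (1 - fps_X)^2 * (1 - fps_const (1 / q) * S_fps k (p ^ (k - 1) * q))"
    by (intro fps_eq_X_div_one_minus_X_squared_mult) (simp_all add: R S_fps_def)
  with R show ?thesis
    by simp
qed

end
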